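(* Let $\beta\ge0$ with $\beta\ne1$, $\rho\in\mathbb{R}$ and $t>0$. Let $\psi$ be a positive, increasing, $C^2$ function on $[0,t]$ such that $$\psi''(s)\ge2\rho\,\psi'(s)+\mathcal{A}\,e^{-2\rho(2-\beta)(t-s)}\psi'(s)^\beta\quad\text{for all }s\in[0,t],$$ where $\mathcal{A}$ is a real number with $\mathcal{A}(\beta-1)\ge0$. Let $\xi(x)=\frac{1-\beta}{2-\beta}\cdot\frac{(1+x)^{\frac{2-\beta}{1-\beta}}-1}{x}$. Then $$\psi(t)-\psi(0)\le\psi'(t)\,\frac{1-e^{-2\rho t}}{2\rho}\,\xi(K_1),\qquad K_1=\frac{1-e^{-2\rho t}}{2\rho}\cdot\frac{\mathcal{A}(\beta-1)}{\psi'(t)^{1-\beta}}.$$ If moreover $1+K_2\ge0$, where $K_2=\frac{e^{2\rho t}-1}{2\rho}\cdot\frac{\mathcal{A}(1-\beta)}{\psi'(0)^{1-\beta}}e^{-2\rho(2-\beta)t}$, then $$\psi(t)-\psi(0)\ge\psi'(0)\,\frac{e^{2\rho t}-1}{2\rho}\,\xi(K_2).$$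
   Context: When $\rho=0$, the factors $\frac{1-e^{-2\rho t}}{2\rho}$ and $\frac{e^{2\rho t}-1}{2\rho}$ are understood as $t$. *)

theory Defs
  imports "HOL-Analysis.Analysis"
begin

definition fac_minus :: "real \<Rightarrow> real \<Rightarrow> real" where
  "fac_minus \<rho> t = (if \<rho> = 0 then t else (1 - exp (- 2 * \<rho> * t)) / (2 * \<rho>))"

definition fac_plus :: "real \<Rightarrow> real \<Rightarrow> real" where
  "fac_plus \<rho> t = (if \<rho> = 0 then t else (exp (2 * \<rho> * t) - 1) / (2 * \<rho>))"

text \<open>xi(x) = (1-beta)/(2-beta) * ((1+x)^((2-beta)/(1-beta)) - 1)/x, extended by
  continuity: xi(0) = 1, and for beta = 2, xi(x) = ln(1+x)/x.\<close>
definition xi :: "real \<Rightarrow> real \<Rightarrow> real" where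
  "xi \<beta> x = (if x = 0 then 1
     else if \<beta> = 2 then ln (1 + x) / x
     else (1 - \<beta>) / (2 - \<beta>) * (((1 + x) powr ((2 - \<beta>) / (1 - \<beta>)) - 1) / x))"

end

theory Submission
  imports Defs
begin

text \<open>Put h(s) = exp(-2\<rho>s) \<psi>'(s). The hypothesis becomes the Bernoulli inequality
  h' \<ge> \<kappa> F' h^\<beta> with \<kappa> = \<A> exp(-2\<rho>(2-\<beta>)t), where F = fac_plus \<rho> has F'(s) = exp(2\<rho>s).
  The substitution h^(1-\<beta>) linearises it: (1-\<beta>)(h^(1-\<beta>) - (1-\<beta>)\<kappa>F) is nondecreasing.
  Comparing h(s) with h(t), resp. h(0), bounds \<psi>' = F' h above, resp. below, by F' times the
  power 1/(1-\<beta>) of an affine function of F; integrating in \<sigma> = F(s) produces \<xi>.\<close>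

lemma le_powr_inverse_exponent:
  fixes p y z :: real
  assumes "p \<noteq> 0" "0 < y" "0 < z" "p * y powr p \<le> p * z"
  shows "y \<le> z powr (1 / p)"
proof -
  have "y = (y powr p) powr (1 / p)" using assms by (simp add: powr_powr)
  also have "\<dots> \<le> z powr (1 / p)"
  proof (cases "p > 0")
    case True
    then show ?thesis using assms by (intro powr_mono2) (auto simp: mult_le_cancel_left_pos)
  next
    case False
    then have "p < 0" using assms(1) by simp
    then show ?thesis using assms by (intro powr_mono2') (auto simp: mult_le_cancel_left_neg)
  qed
  finally show ?thesis .
qed

lemma powr_inverse_exponent_le:
  fixes p y z :: real
  assumes "p \<noteq> 0" "0 < y" "0 \<le> z" "p * z \<le> p * y powr p"
  shows "z powr (1 / p) \<le> y"
proof -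
  have "z powr (1 / p) \<le> (y powr p) powr (1 / p)"
  proof (cases "p > 0")
    case True
    then show ?thesis using assms by (intro powr_mono2) (auto simp: mult_le_cancel_left_pos)
  next
    case False
    then have "p < 0" using assms(1) by simp
    then show ?thesis using assms by (intro powr_mono2') (auto simp: mult_le_cancel_left_neg)
  qed
  also have "\<dots> = y" using assms by (simp add: powr_powr)
  finally show ?thesis .
qed

lemma increment_le_increment:
  fixes f g f' g' :: "real \<Rightarrow> real"
  assumes "a \<le> b" "continuous_on {a..b} f" "continuous_on {a..b} g"
    and "\<And>x. x \<in> {a<..<b} \<Longrightarrow> (f has_real_derivative f' x) (at x)"
    and "\<And>x. x \<in> {a<..<b} \<Longrightarrow> (g has_real_derivative g' x) (at x)"
    and "\<And>x. x \<in> {a<..<b} \<Longrightarrow> f' x \<le> g' x"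
  shows "f b - f a \<le> g b - g a"
proof -
  have "(\<lambda>x. g x - f x) a \<le> (\<lambda>x. g x - f x) b"
  proof (rule DERIV_nonneg_imp_increasing_open[OF assms(1)])
    fix x assume "a < x" "x < b"
    then show "\<exists>y. ((\<lambda>x. g x - f x) has_real_derivative y) (at x) \<and> 0 \<le> y"
      using assms(4-6) by (intro exI[of _ "g' x - f' x"] conjI DERIV_diff) auto
  qed (intro continuous_intros assms(2,3))
  then show ?thesis by simp
qed

lemma fac_plus_0 [simp]: "fac_plus \<rho> 0 = 0"
  unfolding fac_plus_def by simp

lemma fac_plus_has_real_derivative: "(fac_plus \<rho> has_real_derivative exp (2 * \<rho> * x)) (at x)"
proof (cases "\<rho> = 0")
  case True
  then show ?thesis unfolding fac_plus_def by (auto intro!: derivative_eq_intros)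
next
  case False
  have "((\<lambda>x. (exp (2 * \<rho> * x) - 1) / (2 * \<rho>)) has_real_derivative
          exp (2 * \<rho> * x) * (2 * \<rho>) / (2 * \<rho>)) (at x)"
    by (auto intro!: derivative_eq_intros)
  then show ?thesis unfolding fac_plus_def using False by simp
qed

lemma continuous_on_fac_plus: "continuous_on S (fac_plus \<rho>)"
  by (rule DERIV_continuous_on, rule has_field_derivative_at_within, rule fac_plus_has_real_derivative)

lemma fac_minus_eq_exp_fac_plus: "fac_minus \<rho> t = exp (- 2 * \<rho> * t) * fac_plus \<rho> t"
  unfolding fac_minus_def fac_plus_def by (auto simp: field_simps exp_add[symmetric])

definition powr_antideriv :: "real \<Rightarrow> real \<Rightarrow> real \<Rightarrow> real \<Rightarrow> real" where
  "powr_antideriv \<beta> X k \<sigma> = (if k = 0 then X powr (1 / (1 - \<beta>)) * \<sigma>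
     else if \<beta> = 2 then ln (X + k * \<sigma>) / k
     else (X + k * \<sigma>) powr ((2 - \<beta>) / (1 - \<beta>)) / (k * ((2 - \<beta>) / (1 - \<beta>))))"

lemma powr_antideriv_has_real_derivative:
  assumes "\<beta> \<noteq> 1" "0 < X + k * \<sigma>"
  shows "(powr_antideriv \<beta> X k has_real_derivative (X + k * \<sigma>) powr (1 / (1 - \<beta>))) (at \<sigma>)"
proof (cases "k = 0")
  case True
  then show ?thesis unfolding powr_antideriv_def by (auto intro!: derivative_eq_intros)
next
  case k: False
  show ?thesis
  proof (cases "\<beta> = 2")
    case True
    have "(powr_antideriv \<beta> X k has_real_derivative 1 / (X + k * \<sigma>)) (at \<sigma>)"
      unfolding powr_antideriv_def using k True assms
      by (auto intro!: derivative_eq_intros simp: divide_simps)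
    moreover have "(X + k * \<sigma>) powr (1 / (1 - \<beta>)) = 1 / (X + k * \<sigma>)"
      using True assms by (simp add: powr_minus divide_inverse)
    ultimately show ?thesis by simp
  next
    case b2: False
    define p where "p = (2 - \<beta>) / (1 - \<beta>)"
    have p: "p \<noteq> 0" "p - 1 = 1 / (1 - \<beta>)"
      using b2 assms(1) by (auto simp: p_def field_simps)
    have "(powr_antideriv \<beta> X k has_real_derivative
            p * (X + k * \<sigma>) powr (p - 1) * k / (k * p)) (at \<sigma>)"
      unfolding powr_antideriv_def p_def[symmetric] using k b2 assms
      by (auto intro!: derivative_eq_intros)
    then show ?thesis using k p by simp
  qed
qed

lemma continuous_on_powr_antideriv:
  assumes "\<beta> \<noteq> 1" "\<forall>\<sigma>\<in>S. 0 \<le> X + k * \<sigma>" "\<beta> > 1 \<Longrightarrow> \<forall>\<sigma>\<in>S. 0 < X + k * \<sigma>"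
  shows "continuous_on S (powr_antideriv \<beta> X k)"
proof (cases "k = 0 \<or> \<beta> = 2")
  case True
  then show ?thesis unfolding powr_antideriv_def using assms
    by (cases "k = 0") (auto intro!: continuous_intros)
next
  case False
  have "continuous_on S (\<lambda>\<sigma>. (X + k * \<sigma>) powr ((2 - \<beta>) / (1 - \<beta>)))"
  proof (cases "\<beta> > 1")
    case True
    then show ?thesis using assms by (auto intro!: continuous_intros)
  next
    case False
    then have "(2 - \<beta>) / (1 - \<beta>) > 0" using assms(1) by auto
    then show ?thesis using assms
      by (intro continuous_on_powr') (auto intro!: continuous_intros)
  qed
  then show ?thesis unfolding powr_antideriv_def using False
    by (auto intro!: continuous_intros)
qed

lemma powr_antideriv_diff_eq_xi:
  assumes "\<beta> \<noteq> 1" "0 < X" "0 \<le> T" "0 \<le> X + k * T" "\<beta> > 1 \<Longrightarrow> 0 < X + k * T"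
  shows "powr_antideriv \<beta> X k T - powr_antideriv \<beta> X k 0
           = T * X powr (1 / (1 - \<beta>)) * xi \<beta> (k * T / X)"
proof (cases "k = 0 \<or> T = 0")
  case True
  then show ?thesis unfolding powr_antideriv_def xi_def by auto
next
  case False
  then have k: "k \<noteq> 0" and K: "k * T / X \<noteq> 0" using assms(2) by auto
  have base: "X + k * T = X * (1 + k * T / X)" using assms(2) by (simp add: field_simps)
  then have b1: "1 + k * T / X \<ge> 0" using assms by (simp add: zero_le_mult_iff)
  show ?thesis
  proof (cases "\<beta> = 2")
    case True
    have b1': "1 + k * T / X > 0" using assms base True by (simp add: zero_less_mult_iff)
    have "powr_antideriv \<beta> X k T - powr_antideriv \<beta> X k 0 = (ln (X + k * T) - ln X) / k"
      unfolding powr_antideriv_def using k True by (simp add: diff_divide_distrib)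
    also have "\<dots> = ln (1 + k * T / X) / k" using base b1' assms by (simp add: ln_mult)
    also have "\<dots> = T * X powr (1 / (1 - \<beta>)) * xi \<beta> (k * T / X)"
      unfolding xi_def using K True assms k by (simp add: powr_minus field_simps)
    finally show ?thesis .
  next
    case b2: False
    define p where "p = (2 - \<beta>) / (1 - \<beta>)"
    have p: "p \<noteq> 0" using b2 assms by (auto simp: p_def)
    have "p = 1 / (1 - \<beta>) + 1" using assms by (simp add: p_def field_simps)
    then have Xp: "X powr p = X powr (1 / (1 - \<beta>)) * X" using assms by (simp add: powr_add)
    have "powr_antideriv \<beta> X k T - powr_antideriv \<beta> X k 0 = ((X + k * T) powr p - X powr p) / (k * p)"
      unfolding powr_antideriv_def using k b2 by (simp add: p_def diff_divide_distrib)
    also have "\<dots> = X powr p * ((1 + k * T / X) powr p - 1) / (k * p)"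
      using base b1 assms by (simp add: powr_mult right_diff_distrib)
    also have "\<dots> = T * X powr (1 / (1 - \<beta>)) * xi \<beta> (k * T / X)"
      unfolding xi_def using K b2 assms k p Xp
      by (simp add: p_def[symmetric]) (simp add: p_def field_simps)
    finally show ?thesis .
  qed
qed

locale bernoulli_supersolution =
  fixes \<beta> \<kappa> a b :: real and h h' F f :: "real \<Rightarrow> real"
  assumes beta_ne_1: "\<beta> \<noteq> 1"
    and a_le_b: "a \<le> b"
    and continuous_h: "continuous_on {a..b} h"
    and continuous_F: "continuous_on {a..b} F"
    and h_deriv: "\<And>x. x \<in> {a<..<b} \<Longrightarrow> (h has_real_derivative h' x) (at x)"
    and F_deriv: "\<And>x. x \<in> {a<..<b} \<Longrightarrow> (F has_real_derivative f x) (at x)"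
    and f_pos: "\<And>x. x \<in> {a<..<b} \<Longrightarrow> 0 < f x"
    and h_pos: "\<And>x. x \<in> {a..b} \<Longrightarrow> 0 < h x"
    and supersolution: "\<And>x. x \<in> {a<..<b} \<Longrightarrow> \<kappa> * f x * h x powr \<beta> \<le> h' x"
begin

lemma F_less:
  assumes "x \<in> {a..b}" "y \<in> {a..b}" "x < y"
  shows "F x < F y"
proof (rule DERIV_pos_imp_increasing_open[OF \<open>x < y\<close>])
  fix z assume "x < z" "z < y"
  then have "z \<in> {a<..<b}" using assms by auto
  then show "\<exists>d. (F has_real_derivative d) (at z) \<and> 0 < d"
    using F_deriv f_pos by blast
qed (use assms in \<open>auto intro: continuous_on_subset[OF continuous_F]\<close>)

lemma F_le: "x \<in> {a..b} \<Longrightarrow> y \<in> {a..b} \<Longrightarrow> x \<le> y \<Longrightarrow> F x \<le> F y"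
  using F_less by (cases "x = y") (auto intro: less_imp_le)

text \<open>The factor \<open>1 - \<beta>\<close> covers both directions of monotonicity at once.\<close>
lemma energy_increment:
  assumes "x \<in> {a..b}" "y \<in> {a..b}" "x \<le> y"
  shows "(1 - \<beta>) * (h x powr (1 - \<beta>) + (1 - \<beta>) * \<kappa> * (F y - F x)) \<le> (1 - \<beta>) * h y powr (1 - \<beta>)"
proof -
  define E where "E z = (1 - \<beta>) * (h z powr (1 - \<beta>) - (1 - \<beta>) * \<kappa> * F z)" for z
  have "E x \<le> E y"
  proof (rule DERIV_nonneg_imp_increasing_open[OF \<open>x \<le> y\<close>])
    fix z assume "x < z" "z < y"
    then have z: "z \<in> {a<..<b}" using assms by auto
    then have hz: "0 < h z" using h_pos by auto
    have "h z powr (- \<beta>) * (\<kappa> * f z * h z powr \<beta>) \<le> h z powr (- \<beta>) * h' z"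
      using supersolution[OF z] by (intro mult_left_mono) auto
    moreover have "h z powr (- \<beta>) * h z powr \<beta> = 1" using hz by (simp add: powr_add[symmetric])
    ultimately have "\<kappa> * f z \<le> h z powr (- \<beta>) * h' z"
      by (simp add: algebra_simps)
    then have "0 \<le> (1 - \<beta>)\<^sup>2 * (h z powr (- \<beta>) * h' z - \<kappa> * f z)"
      by simp
    moreover have "(E has_real_derivative (1 - \<beta>)\<^sup>2 * (h z powr (- \<beta>) * h' z - \<kappa> * f z)) (at z)"
      unfolding E_def using h_deriv[OF z] F_deriv[OF z] hz
      by (auto intro!: derivative_eq_intros simp: power2_eq_square algebra_simps)
    ultimately show "\<exists>d. (E has_real_derivative d) (at z) \<and> 0 \<le> d" by blast
  next
    have "continuous_on {x..y} h" "continuous_on {x..y} F"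
      using assms by (auto intro: continuous_on_subset[OF continuous_h] continuous_on_subset[OF continuous_F])
    moreover have "\<forall>z\<in>{x..y}. 0 < h z" using assms by (fastforce intro: h_pos)
    ultimately show "continuous_on {x..y} E"
      unfolding E_def by (auto intro!: continuous_intros)
  qed
  then show ?thesis unfolding E_def by (simp add: algebra_simps)
qed

lemma increment_upper_bound:
  assumes "0 \<le> (\<beta> - 1) * \<kappa>" and "continuous_on {a..b} \<psi>"
    and "\<And>x. x \<in> {a<..<b} \<Longrightarrow> (\<psi> has_real_derivative f x * h x) (at x)"
  shows "\<psi> b - \<psi> a \<le> (F b - F a) * h b * xi \<beta> ((\<beta> - 1) * \<kappa> * (F b - F a) / h b powr (1 - \<beta>))"
proof -
  define X where "X = h b powr (1 - \<beta>)"
  define k where "k = (\<beta> - 1) * \<kappa>"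
  define B where "B x = X + k * (F b - F x)" for x
  define G where "G x = - powr_antideriv \<beta> X k (F b - F x)" for x
  have b: "b \<in> {a..b}" using a_le_b by auto
  have X: "0 < X" using h_pos[OF b] by (simp add: X_def)
  have F_gap: "0 \<le> F b - F x" if "x \<in> {a..b}" for x using F_le[OF that b] that by simp
  have base_pos: "0 < X + k * \<sigma>" if "0 \<le> \<sigma>" for \<sigma>
    using X assms(1) that by (simp add: k_def add_pos_nonneg)
  have bound: "h x \<le> B x powr (1 / (1 - \<beta>))" if x: "x \<in> {a..b}" for x
  proof (rule le_powr_inverse_exponent)
    show "1 - \<beta> \<noteq> 0" "0 < h x" "0 < B x"
      using beta_ne_1 h_pos[OF x] base_pos[OF F_gap[OF x]] by (auto simp: B_def)
    show "(1 - \<beta>) * h x powr (1 - \<beta>) \<le> (1 - \<beta>) * B x"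
      using energy_increment[OF x b] x by (simp add: B_def X_def k_def algebra_simps)
  qed
  have "\<psi> b - \<psi> a \<le> G b - G a"
  proof (rule increment_le_increment[where g' = "\<lambda>x. B x powr (1 / (1 - \<beta>)) * f x"])
    show "continuous_on {a..b} G"
      unfolding G_def using F_gap base_pos beta_ne_1
      by (intro continuous_intros continuous_on_compose2[of "{0..}", OF continuous_on_powr_antideriv]
            continuous_F) (auto intro: less_imp_le)
  next
    fix x assume x: "x \<in> {a<..<b}"
    then have "0 < B x" using base_pos F_gap by (simp add: B_def)
    then show "(G has_real_derivative B x powr (1 / (1 - \<beta>)) * f x) (at x)"
      unfolding G_def B_def using F_deriv[OF x] beta_ne_1
      by (auto intro!: derivative_eq_intros DERIV_chain2[OF powr_antideriv_has_real_derivative])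
    show "f x * h x \<le> B x powr (1 / (1 - \<beta>)) * f x"
      using bound x f_pos[OF x] by (simp add: mult.commute mult_left_mono)
  qed (use a_le_b assms in auto)
  also have "\<dots> = powr_antideriv \<beta> X k (F b - F a) - powr_antideriv \<beta> X k 0"
    by (simp add: G_def)
  also have "\<dots> = (F b - F a) * X powr (1 / (1 - \<beta>)) * xi \<beta> (k * (F b - F a) / X)"
    using beta_ne_1 X F_gap base_pos a_le_b by (intro powr_antideriv_diff_eq_xi) (auto intro: less_imp_le)
  also have "X powr (1 / (1 - \<beta>)) = h b"
    using h_pos[OF b] beta_ne_1 by (simp add: X_def powr_powr)
  finally show ?thesis by (simp add: X_def k_def)
qed

lemma increment_lower_bound:
  assumes "0 \<le> h a powr (1 - \<beta>) + (1 - \<beta>) * \<kappa> * (F b - F a)" and "continuous_on {a..b} \<psi>"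
    and "\<And>x. x \<in> {a<..<b} \<Longrightarrow> (\<psi> has_real_derivative f x * h x) (at x)"
  shows "(F b - F a) * h a * xi \<beta> ((1 - \<beta>) * \<kappa> * (F b - F a) / h a powr (1 - \<beta>)) \<le> \<psi> b - \<psi> a"
proof -
  define X where "X = h a powr (1 - \<beta>)"
  define k where "k = (1 - \<beta>) * \<kappa>"
  define \<Delta> where "\<Delta> = F b - F a"
  define B where "B x = X + k * (F x - F a)" for x
  define G where "G x = powr_antideriv \<beta> X k (F x - F a)" for x
  have a: "a \<in> {a..b}" and b: "b \<in> {a..b}" using a_le_b by auto
  have X: "0 < X" using h_pos[OF a] by (simp add: X_def)
  have F_gap: "0 \<le> F x - F a" "F x - F a \<le> \<Delta>" if "x \<in> {a..b}" for x
    using F_le[OF a that] F_le[OF that b] that by (auto simp: \<Delta>_def)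
  have end_nonneg: "0 \<le> X + k * \<Delta>" using assms(1) by (simp add: X_def k_def \<Delta>_def)
  have end_pos: "0 < X + k * \<Delta>" if "\<beta> > 1"
  proof -
    have "(1 - \<beta>) * (X + k * \<Delta>) \<le> (1 - \<beta>) * h b powr (1 - \<beta>)"
      using energy_increment[OF a b a_le_b] by (simp add: X_def k_def \<Delta>_def)
    then have "h b powr (1 - \<beta>) \<le> X + k * \<Delta>" using that by (simp add: mult_le_cancel_left)
    moreover have "0 < h b powr (1 - \<beta>)" using h_pos[OF b] by simp
    ultimately show ?thesis by linarith
  qed
  have base_pos: "0 < X + k * \<sigma>" if "0 \<le> \<sigma>" "\<sigma> < \<Delta>" for \<sigma>
  proof (cases "0 \<le> k")
    case True
    then show ?thesis using X that by (simp add: add_pos_nonneg)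
  next
    case False
    then have "k * \<Delta> < k * \<sigma>" using that by (simp add: mult_strict_left_mono_neg)
    then show ?thesis using end_nonneg by linarith
  qed
  have base_nonneg: "\<forall>\<sigma>\<in>{0..\<Delta>}. 0 \<le> X + k * \<sigma>"
    using base_pos end_nonneg by (force simp: le_less)
  have "\<forall>\<sigma>\<in>{0..\<Delta>}. 0 < X + k * \<sigma>" if "\<beta> > 1"
    using base_pos end_pos[OF that] by (force simp: le_less)
  note continuous_G = continuous_on_powr_antideriv[OF beta_ne_1 base_nonneg this]
  have bound: "B x powr (1 / (1 - \<beta>)) \<le> h x" if x: "x \<in> {a..b}" for x
  proof (rule powr_inverse_exponent_le)
    show "1 - \<beta> \<noteq> 0" "0 < h x" "0 \<le> B x"
      using beta_ne_1 h_pos[OF x] base_nonneg F_gap[OF x] by (auto simp: B_def)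
    show "(1 - \<beta>) * B x \<le> (1 - \<beta>) * h x powr (1 - \<beta>)"
      using energy_increment[OF a x] x by (simp add: B_def X_def k_def)
  qed
  have "G b - G a \<le> \<psi> b - \<psi> a"
  proof (rule increment_le_increment[where f' = "\<lambda>x. B x powr (1 / (1 - \<beta>)) * f x"])
    show "continuous_on {a..b} G"
      unfolding G_def using F_gap
      by (intro continuous_on_compose2[OF continuous_G] continuous_intros continuous_F) auto
  next
    fix x assume x: "x \<in> {a<..<b}"
    then have "F x - F a < \<Delta>" using F_less[of x b] by (simp add: \<Delta>_def)
    then have "0 < B x" using base_pos F_gap[of x] x by (simp add: B_def)
    then show "(G has_real_derivative B x powr (1 / (1 - \<beta>)) * f x) (at x)"
      unfolding G_def B_def using F_deriv[OF x] beta_ne_1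
      by (auto intro!: derivative_eq_intros DERIV_chain2[OF powr_antideriv_has_real_derivative])
    show "B x powr (1 / (1 - \<beta>)) * f x \<le> f x * h x"
      using bound x f_pos[OF x] by (simp add: mult.commute mult_left_mono)
  qed (use a_le_b assms in auto)
  moreover have "G b - G a = \<Delta> * X powr (1 / (1 - \<beta>)) * xi \<beta> (k * \<Delta> / X)"
    unfolding G_def \<Delta>_def[symmetric] using beta_ne_1 X F_gap[OF b] end_nonneg end_pos
    by (simp add: powr_antideriv_diff_eq_xi)
  moreover have "X powr (1 / (1 - \<beta>)) = h a"
    using h_pos[OF a] beta_ne_1 by (simp add: X_def powr_powr)
  ultimately show ?thesis by (simp add: X_def k_def \<Delta>_def)
qed

end

lemma exp_rescaled_supersolution:
  fixes \<A> \<beta> \<rho> t x d d2 :: real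
  assumes "0 < d" "2 * \<rho> * d + \<A> * exp (- 2 * \<rho> * (2 - \<beta>) * (t - x)) * d powr \<beta> \<le> d2"
  shows "\<A> * exp (- 2 * \<rho> * (2 - \<beta>) * t) * exp (2 * \<rho> * x) * (exp (- 2 * \<rho> * x) * d) powr \<beta>
           \<le> exp (- 2 * \<rho> * x) * (d2 - 2 * \<rho> * d)"
proof -
  have "exp (- 2 * \<rho> * (2 - \<beta>) * t) * exp (2 * \<rho> * x) * exp (- 2 * \<rho> * x * \<beta>)
          = exp (- 2 * \<rho> * x) * exp (- 2 * \<rho> * (2 - \<beta>) * (t - x))"
    by (simp add: exp_add[symmetric] algebra_simps)
  then have "\<A> * exp (- 2 * \<rho> * (2 - \<beta>) * t) * exp (2 * \<rho> * x) * (exp (- 2 * \<rho> * x) * d) powr \<beta>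
               = exp (- 2 * \<rho> * x) * (\<A> * exp (- 2 * \<rho> * (2 - \<beta>) * (t - x)) * d powr \<beta>)"
    using assms(1) by (simp add: powr_mult exp_powr_real algebra_simps)
  also have "\<dots> \<le> exp (- 2 * \<rho> * x) * (d2 - 2 * \<rho> * d)"
    using assms(2) by (intro mult_left_mono) auto
  finally show ?thesis .
qed

lemma has_real_derivative_at_interior:
  "(f has_real_derivative D) (at x within {a..b}) \<Longrightarrow> x \<in> {a<..<b} \<Longrightarrow> (f has_real_derivative D) (at x)"
  by (simp add: at_within_Icc_at)

context
  fixes \<beta> \<rho> t \<A> :: real and \<psi> \<psi>' \<psi>'' :: "real \<Rightarrow> real"
  assumes beta_ne_1: "\<beta> \<noteq> 1"
    and t_pos: "0 < t"
    and psi_deriv: "\<forall>s\<in>{0..t}. (\<psi> has_real_derivative \<psi>' s) (at s within {0..t})"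
    and psi'_deriv: "\<forall>s\<in>{0..t}. (\<psi>' has_real_derivative \<psi>'' s) (at s within {0..t})"
    and psi'_pos: "\<forall>s\<in>{0..t}. \<psi>' s > 0"
    and growth: "\<forall>s\<in>{0..t}. \<psi>'' s \<ge> 2 * \<rho> * \<psi>' s
                  + \<A> * exp (- 2 * \<rho> * (2 - \<beta>) * (t - s)) * \<psi>' s powr \<beta>"
begin

lemma rescaled_bernoulli_supersolution:
  "bernoulli_supersolution \<beta> (\<A> * exp (- 2 * \<rho> * (2 - \<beta>) * t)) 0 t (\<lambda>x. exp (- 2 * \<rho> * x) * \<psi>' x)
     (\<lambda>x. exp (- 2 * \<rho> * x) * (\<psi>'' x - 2 * \<rho> * \<psi>' x)) (fac_plus \<rho>) (\<lambda>x. exp (2 * \<rho> * x))"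
proof
  fix x assume x: "x \<in> {0<..<t}"
  then show "((\<lambda>x. exp (- 2 * \<rho> * x) * \<psi>' x) has_real_derivative
               exp (- 2 * \<rho> * x) * (\<psi>'' x - 2 * \<rho> * \<psi>' x)) (at x)"
    using has_real_derivative_at_interior[OF bspec[OF psi'_deriv]]
    by (auto intro!: derivative_eq_intros simp: algebra_simps)
  show "\<A> * exp (- 2 * \<rho> * (2 - \<beta>) * t) * exp (2 * \<rho> * x) * (exp (- 2 * \<rho> * x) * \<psi>' x) powr \<beta>
          \<le> exp (- 2 * \<rho> * x) * (\<psi>'' x - 2 * \<rho> * \<psi>' x)"
    using psi'_pos growth x by (intro exp_rescaled_supersolution) auto
next
  show "continuous_on {0..t} (\<lambda>x. exp (- 2 * \<rho> * x) * \<psi>' x)"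
    using psi'_deriv by (intro continuous_intros) (metis DERIV_continuous_on)
qed (use beta_ne_1 t_pos psi'_pos in \<open>auto intro: fac_plus_has_real_derivative continuous_on_fac_plus\<close>)

lemma continuous_on_psi: "continuous_on {0..t} \<psi>"
  using psi_deriv by (metis DERIV_continuous_on)

lemma psi_has_real_derivative_rescaled:
  "x \<in> {0<..<t} \<Longrightarrow> (\<psi> has_real_derivative exp (2 * \<rho> * x) * (exp (- 2 * \<rho> * x) * \<psi>' x)) (at x)"
  using has_real_derivative_at_interior[OF bspec[OF psi_deriv]]
  by (simp add: exp_minus[symmetric] mult.assoc[symmetric] exp_add[symmetric])

lemma increment_le_fac_minus_xi:
  assumes "\<A> * (\<beta> - 1) \<ge> 0"
  shows "\<psi> t - \<psi> 0 \<le> \<psi>' t * fac_minus \<rho> t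
           * xi \<beta> (fac_minus \<rho> t * (\<A> * (\<beta> - 1)) / \<psi>' t powr (1 - \<beta>))"
proof -
  define m where "m = exp (- 2 * \<rho> * (2 - \<beta>) * t)"
  have "0 \<le> (\<A> * (\<beta> - 1)) * m" using assms by (simp add: m_def)
  then have "0 \<le> (\<beta> - 1) * (\<A> * m)" by (simp add: ac_simps)
  from bernoulli_supersolution.increment_upper_bound[OF rescaled_bernoulli_supersolution
      this[unfolded m_def] continuous_on_psi psi_has_real_derivative_rescaled]
  have "\<psi> t - \<psi> 0 \<le> fac_plus \<rho> t * (exp (- 2 * \<rho> * t) * \<psi>' t)
          * xi \<beta> ((\<beta> - 1) * (\<A> * m) * fac_plus \<rho> t / (exp (- 2 * \<rho> * t) * \<psi>' t) powr (1 - \<beta>))"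
    by (simp add: m_def)
  moreover have "fac_plus \<rho> t * (exp (- 2 * \<rho> * t) * \<psi>' t) = \<psi>' t * fac_minus \<rho> t"
    by (simp add: fac_minus_eq_exp_fac_plus)
  moreover have "(\<beta> - 1) * (\<A> * m) * fac_plus \<rho> t / (exp (- 2 * \<rho> * t) * \<psi>' t) powr (1 - \<beta>)
                   = fac_minus \<rho> t * (\<A> * (\<beta> - 1)) / \<psi>' t powr (1 - \<beta>)"
  proof -
    have "0 < \<psi>' t" using psi'_pos t_pos by simp
    moreover have "m = exp (- 2 * \<rho> * t) * exp (- 2 * \<rho> * t * (1 - \<beta>))"
      by (simp add: m_def exp_add[symmetric] algebra_simps)
    ultimately show ?thesis
      by (simp add: powr_mult exp_powr_real fac_minus_eq_exp_fac_plus field_simps)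
  qed
  ultimately show ?thesis by (simp only:)
qed

lemma fac_plus_xi_le_increment:
  assumes "1 + fac_plus \<rho> t * (\<A> * (1 - \<beta>)) / \<psi>' 0 powr (1 - \<beta>)
             * exp (- 2 * \<rho> * (2 - \<beta>) * t) \<ge> 0"
  shows "\<psi>' 0 * fac_plus \<rho> t * xi \<beta> (fac_plus \<rho> t * (\<A> * (1 - \<beta>)) / \<psi>' 0 powr (1 - \<beta>)
           * exp (- 2 * \<rho> * (2 - \<beta>) * t)) \<le> \<psi> t - \<psi> 0"
proof -
  define m where "m = exp (- 2 * \<rho> * (2 - \<beta>) * t)"
  have "0 < \<psi>' 0" using psi'_pos t_pos by simp
  then have P: "0 < \<psi>' 0 powr (1 - \<beta>)" by simp
  have "0 \<le> \<psi>' 0 powr (1 - \<beta>) * (1 + fac_plus \<rho> t * (\<A> * (1 - \<beta>)) / \<psi>' 0 powr (1 - \<beta>) * m)"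
    using P assms by (simp add: m_def)
  also have "\<dots> = \<psi>' 0 powr (1 - \<beta>) + (1 - \<beta>) * (\<A> * m) * fac_plus \<rho> t"
    using P by (simp add: field_simps)
  finally have "0 \<le> (exp (- 2 * \<rho> * 0) * \<psi>' 0) powr (1 - \<beta>)
                    + (1 - \<beta>) * (\<A> * m) * (fac_plus \<rho> t - fac_plus \<rho> 0)"
    by simp
  from bernoulli_supersolution.increment_lower_bound[OF rescaled_bernoulli_supersolution
      this[unfolded m_def] continuous_on_psi psi_has_real_derivative_rescaled]
  show ?thesis by (simp add: m_def ac_simps)
qed

end

theorem lemma12:
  fixes \<beta> \<rho> t \<A> :: real and \<psi> \<psi>' \<psi>'' :: "real \<Rightarrow> real"
  assumes hbeta: "\<beta> \<ge> 0" "\<beta> \<noteq> 1"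
    and ht: "t > 0"
    and hd1: "\<forall>s\<in>{0..t}. (\<psi> has_real_derivative \<psi>' s) (at s within {0..t})"
    and hd2: "\<forall>s\<in>{0..t}. (\<psi>' has_real_derivative \<psi>'' s) (at s within {0..t})"
    and hcont: "continuous_on {0..t} \<psi>''"
    and hpos: "\<forall>s\<in>{0..t}. \<psi> s > 0"
    and hincr: "\<forall>s\<in>{0..t}. \<psi>' s > 0"
    and hA: "\<A> * (\<beta> - 1) \<ge> 0"
    and hineq: "\<forall>s\<in>{0..t}. \<psi>'' s \<ge> 2 * \<rho> * \<psi>' s
                 + \<A> * exp (- 2 * \<rho> * (2 - \<beta>) * (t - s)) * \<psi>' s powr \<beta>"
  shows "\<psi> t - \<psi> 0 \<le> \<psi>' t * fac_minus \<rho> t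
           * xi \<beta> (fac_minus \<rho> t * (\<A> * (\<beta> - 1)) / \<psi>' t powr (1 - \<beta>))
    \<and> (1 + fac_plus \<rho> t * (\<A> * (1 - \<beta>)) / \<psi>' 0 powr (1 - \<beta>)
               * exp (- 2 * \<rho> * (2 - \<beta>) * t) \<ge> 0 \<longrightarrow>
         \<psi> t - \<psi> 0 \<ge> \<psi>' 0 * fac_plus \<rho> t
           * xi \<beta> (fac_plus \<rho> t * (\<A> * (1 - \<beta>)) / \<psi>' 0 powr (1 - \<beta>)
                    * exp (- 2 * \<rho> * (2 - \<beta>) * t)))"
proof -
  from hbeta(2) ht hd1 hd2 hincr hineq
  show ?thesis using increment_le_fac_minus_xi[OF _ _ _ _ _ _ hA] fac_plus_xi_le_increment by blast
qed

end
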